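(* With $P$, $\widehat P$, $R_m$, $\Gamma$, $\alpha_\sigma$, $\widehat\alpha_\sigma$ and $\Psi(P,\widehat P)$ as in the context, for every conditional plan $\sigma\in\Gamma$ and every $s\in S$, $$|\alpha_\sigma(s)-\widehat\alpha_\sigma(s)|\le \frac{2\gamma R_m}{(1-\gamma)^2}\,\Psi(P,\widehat P).$$
   Context: $P=\langle S,A,O,T,Z,R,b_0,\gamma\rangle$ is a POMDP with bounded $S\subset\mathbb R^n$, $A\subset\mathbb R^d$, $O\subset\mathbb R^l$, conditional densities $T(s,a,s')=p(s'\mid s,a)$, $Z(s',a,o)=p(o\mid s',a)$, bounded reward $R$, discount $\gamma\in(0,1)$; $\widehat P=\langle S,A,O,\widehat T,\widehat Z,R,b_0,\gamma\rangle$ differs only in transition and observation densities. $R_m=\max\{|\min_{s,a}R(s,a)|,\max_{s,a}R(s,a)\}$. $D_{TV}(\mu,\nu)=\sup_E|\mu(E)-\nu(E)|$. SNM: $\Psi(P,\widehat P)=\sup_{s,a}D_{TV}(T(s,a,\cdot),\widehat T(s,a,\cdot))+\sup_{s,a}D_{TV}(Z(s,a,\cdot),\widehat Z(s,a,\cdot))$. A conditional plan $\sigma=\langle a,\nu\rangle\in\Gamma$ consists of an action $a\in A$ and an observation strategy $\nu:O\to\Gamma$. Its $\alpha$-function is $\alpha_\sigma(s)=R(s,a)+\gamma\int_S\int_O T(s,a,s')Z(s',a,o)\alpha_{\nu(o)}(s')\,do\,ds'$, and $\widehat\alpha_\sigma$ is defined identically with $\widehat T,\widehat Z$. *)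

theory Defs
  imports "HOL-Analysis.Analysis"
begin

definition dtv :: "'x::euclidean_space set \<Rightarrow> ('x \<Rightarrow> real) \<Rightarrow> ('x \<Rightarrow> real) \<Rightarrow> real" where
  "dtv X f g = (SUP E \<in> {E. E \<in> sets lborel \<and> E \<subseteq> X}.
      \<bar>(LINT x:E|lborel. f x) - (LINT x:E|lborel. g x)\<bar>)"

definition Rmax :: "'s set \<Rightarrow> 'a set \<Rightarrow> ('s \<Rightarrow> 'a \<Rightarrow> real) \<Rightarrow> real" where
  "Rmax S A R = max \<bar>INF p \<in> S \<times> A. R (fst p) (snd p)\<bar> (SUP p \<in> S \<times> A. R (fst p) (snd p))"

definition SNM :: "'s::euclidean_space set \<Rightarrow> 'a set \<Rightarrow> 'o::euclidean_space set
   \<Rightarrow> ('s \<Rightarrow> 'a \<Rightarrow> 's \<Rightarrow> real) \<Rightarrow> ('s \<Rightarrow> 'a \<Rightarrow> 'o \<Rightarrow> real)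
   \<Rightarrow> ('s \<Rightarrow> 'a \<Rightarrow> 's \<Rightarrow> real) \<Rightarrow> ('s \<Rightarrow> 'a \<Rightarrow> 'o \<Rightarrow> real) \<Rightarrow> real" where
  "SNM S A Ob T Z T' Z' =
     (SUP p \<in> S \<times> A. dtv S (T (fst p) (snd p)) (T' (fst p) (snd p)))
   + (SUP p \<in> S \<times> A. dtv Ob (Z (fst p) (snd p)) (Z' (fst p) (snd p)))"

definition cond_densities :: "'s::euclidean_space set \<Rightarrow> 'a set \<Rightarrow> 'o::euclidean_space set
   \<Rightarrow> ('s \<Rightarrow> 'a \<Rightarrow> 's \<Rightarrow> real) \<Rightarrow> ('s \<Rightarrow> 'a \<Rightarrow> 'o \<Rightarrow> real) \<Rightarrow> bool" where
  "cond_densities S A Ob T Z \<longleftrightarrow>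
     (\<forall>s\<in>S. \<forall>a\<in>A. T s a \<in> borel_measurable lborel \<and> (\<forall>s'. T s a s' \<ge> 0)
        \<and> set_integrable lborel S (T s a) \<and> (LINT s':S|lborel. T s a s') = 1) \<and>
     (\<forall>a\<in>A. (\<lambda>(s', y). Z s' a y) \<in> borel_measurable (lborel \<Otimes>\<^sub>M lborel)) \<and>
     (\<forall>s'\<in>S. \<forall>a\<in>A. (\<forall>y. Z s' a y \<ge> 0)
        \<and> set_integrable lborel Ob (Z s' a) \<and> (LINT y:Ob|lborel. Z s' a y) = 1)"

text \<open>alpha is the (bounded, measurable) alpha-function family of the conditional plans,
  where a plan sigma has action act sigma and observation strategy nxt sigma.\<close>
definition is_alpha :: "'s::euclidean_space set \<Rightarrow> 'o::euclidean_space set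
   \<Rightarrow> ('s \<Rightarrow> 'a \<Rightarrow> 's \<Rightarrow> real) \<Rightarrow> ('s \<Rightarrow> 'a \<Rightarrow> 'o \<Rightarrow> real) \<Rightarrow> ('s \<Rightarrow> 'a \<Rightarrow> real) \<Rightarrow> real
   \<Rightarrow> ('p \<Rightarrow> 'a) \<Rightarrow> ('p \<Rightarrow> 'o \<Rightarrow> 'p) \<Rightarrow> ('p \<Rightarrow> 's \<Rightarrow> real) \<Rightarrow> bool" where
  "is_alpha S Ob T Z R \<gamma> act nxt \<alpha> \<longleftrightarrow>
     (\<exists>B. \<forall>\<sigma>. \<forall>s\<in>S. \<bar>\<alpha> \<sigma> s\<bar> \<le> B) \<and>
     (\<forall>\<sigma>. (\<lambda>(s', y). indicator (S \<times> Ob) (s', y) * \<alpha> (nxt \<sigma> y) s')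
             \<in> borel_measurable (lborel \<Otimes>\<^sub>M lborel)) \<and>
     (\<forall>\<sigma>. \<forall>s\<in>S. \<alpha> \<sigma> s = R s (act \<sigma>) + \<gamma> *
        (LINT s':S|lborel. (LINT y:Ob|lborel. T s (act \<sigma>) s' * Z s' (act \<sigma>) y * \<alpha> (nxt \<sigma> y) s')))"

end

theory Submission
  imports Defs
begin

text \<open>Subtracting the two recursions, \<open>\<alpha>\<^sub>\<sigma>(s) - \<alpha>'\<^sub>\<sigma>(s)\<close> is \<open>\<gamma>\<close> times the difference of
  \<open>\<integral> T g\<close> and \<open>\<integral> T' g'\<close>, where \<open>g\<close> and \<open>g'\<close> average the successor \<open>\<alpha>\<close>-functions over
  the observation densities \<open>Z\<close> and \<open>Z'\<close>. Swapping \<open>T\<close> for \<open>T'\<close>, then \<open>Z\<close> for \<open>Z'\<close>, then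
  \<open>\<alpha>\<close> for \<open>\<alpha>'\<close> splits this into three errors. For densities \<open>p\<close>, \<open>q\<close> and \<open>|f| \<le> K\<close>
  one has \<open>|\<integral> (p - q) f| \<le> 2 K D\<^sub>T\<^sub>V(p, q)\<close> (integrate separately over \<open>{p \<ge> q}\<close> and its
  complement), and every \<open>\<alpha>\<close>-function is bounded by \<open>K = R\<^sub>m / (1 - \<gamma>)\<close> because its
  supremum \<open>M\<close> satisfies \<open>M \<le> R\<^sub>m + \<gamma> M\<close>. So the first two errors are at most \<open>2 K \<Psi>\<close>
  together and the third is at most the supremum \<open>D\<close> of all differences; hence
  \<open>D \<le> \<gamma> (2 K \<Psi> + D)\<close>, i.e. \<open>D \<le> 2 \<gamma> R\<^sub>m \<Psi> / (1 - \<gamma>)\<^sup>2\<close>.\<close>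

definition density_on :: "'x::euclidean_space set \<Rightarrow> ('x \<Rightarrow> real) \<Rightarrow> bool" where
  "density_on X p \<longleftrightarrow> p \<in> borel_measurable lborel \<and> (\<forall>x. 0 \<le> p x) \<and>
     set_integrable lborel X p \<and> (LINT x:X|lborel. p x) = 1"

lemma set_borel_measurable_diff:
  fixes f g :: "'x \<Rightarrow> real"
  assumes "set_borel_measurable M X f" "set_borel_measurable M X g"
  shows "set_borel_measurable M X (\<lambda>x. f x - g x)"
  using borel_measurable_diff[OF assms[unfolded set_borel_measurable_def]]
  unfolding set_borel_measurable_def by (simp add: right_diff_distrib)

lemma
  fixes p f :: "'x::euclidean_space \<Rightarrow> real"
  assumes p: "p \<in> borel_measurable lborel" and p_nonneg: "\<And>x. x \<in> X \<Longrightarrow> 0 \<le> p x"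
    and p_int: "set_integrable lborel X p" and f: "set_borel_measurable lborel X f"
    and f_le: "\<And>x. x \<in> X \<Longrightarrow> \<bar>f x\<bar> \<le> K"
  shows set_integrable_mult_bounded: "set_integrable lborel X (\<lambda>x. p x * f x)"
    and abs_set_integral_mult_bounded_le:
      "\<bar>LINT x:X|lborel. p x * f x\<bar> \<le> K * (LINT x:X|lborel. p x)"
proof -
  have pf_le: "\<bar>p x * f x\<bar> \<le> K * p x" if "x \<in> X" for x
    using mult_left_mono[OF f_le p_nonneg, OF that that] p_nonneg[OF that]
    by (simp add: abs_mult mult.commute)
  have pf: "set_borel_measurable lborel X (\<lambda>x. p x * f x)"
    using borel_measurable_times[OF p f[unfolded set_borel_measurable_def]]
    unfolding set_borel_measurable_def by (simp add: mult.left_commute)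
  show int: "set_integrable lborel X (\<lambda>x. p x * f x)"
    using set_integrable_mult_right[OF p_int, of K] pf
    by (rule set_integrable_bound) (use pf_le in \<open>auto intro!: AE_I2 order_trans[OF _ abs_ge_self]\<close>)
  have "\<bar>LINT x:X|lborel. p x * f x\<bar> \<le> (LINT x:X|lborel. \<bar>p x * f x\<bar>)"
    using set_integral_norm_bound[OF int] by simp
  also have "\<dots> \<le> (LINT x:X|lborel. K * p x)"
    using set_integrable_abs[OF int] set_integrable_mult_right[OF p_int, of K] pf_le
    by (rule set_integral_mono)
  also have "\<dots> = K * (LINT x:X|lborel. p x)"
    by simp
  finally show "\<bar>LINT x:X|lborel. p x * f x\<bar> \<le> K * (LINT x:X|lborel. p x)" .
qed

lemma
  assumes "density_on X p" "set_borel_measurable lborel X f" "\<And>x. x \<in> X \<Longrightarrow> \<bar>f x\<bar> \<le> K"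
  shows density_on_set_integrable_mult: "set_integrable lborel X (\<lambda>x. p x * f x)"
    and density_on_abs_set_integral_le: "\<bar>LINT x:X|lborel. p x * f x\<bar> \<le> K"
  using set_integrable_mult_bounded[of p X f K] abs_set_integral_mult_bounded_le[of p X f K] assms
  unfolding density_on_def by auto

lemma density_on_set_integral_diff_le:
  assumes p: "density_on X p"
    and f: "set_borel_measurable lborel X f" "\<And>x. x \<in> X \<Longrightarrow> \<bar>f x\<bar> \<le> K"
    and g: "set_borel_measurable lborel X g" "\<And>x. x \<in> X \<Longrightarrow> \<bar>g x\<bar> \<le> L"
    and fg: "\<And>x. x \<in> X \<Longrightarrow> \<bar>f x - g x\<bar> \<le> e"
  shows "\<bar>(LINT x:X|lborel. p x * f x) - (LINT x:X|lborel. p x * g x)\<bar> \<le> e"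
proof -
  have "(LINT x:X|lborel. p x * f x) - (LINT x:X|lborel. p x * g x) = (LINT x:X|lborel. p x * (f x - g x))"
    using set_integral_diff(2)[OF density_on_set_integrable_mult[OF p f] density_on_set_integrable_mult[OF p g]]
    by (simp add: right_diff_distrib)
  also have "\<bar>\<dots>\<bar> \<le> e"
    using p set_borel_measurable_diff[OF f(1) g(1)] fg by (rule density_on_abs_set_integral_le)
  finally show ?thesis .
qed

lemma abs_set_integral_le_subset:
  fixes r :: "'x \<Rightarrow> real"
  assumes r: "set_integrable M X r" and E: "E \<in> sets M" "E \<subseteq> X"
  shows "\<bar>LINT x:E|M. r x\<bar> \<le> (LINT x:X|M. \<bar>r x\<bar>)"
proof -
  have "\<bar>LINT x:E|M. r x\<bar> \<le> (LINT x:E|M. \<bar>r x\<bar>)"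
    using set_integral_norm_bound[OF set_integrable_subset[OF r E]] by simp
  also have "\<dots> \<le> (LINT x:X|M. \<bar>r x\<bar>)"
    using set_integrable_abs[OF set_integrable_subset[OF r E]] set_integrable_abs[OF r] E(2)
    unfolding set_integrable_def set_lebesgue_integral_def
    by (intro integral_mono) (auto split: split_indicator)
  finally show ?thesis .
qed

lemma
  fixes p q :: "'x::euclidean_space \<Rightarrow> real"
  assumes p: "set_integrable lborel X p" and q: "set_integrable lborel X q"
  shows abs_set_integral_diff_le_dtv: "\<And>E. E \<in> sets lborel \<Longrightarrow> E \<subseteq> X \<Longrightarrow>
      \<bar>(LINT x:E|lborel. p x) - (LINT x:E|lborel. q x)\<bar> \<le> dtv X p q"
    and dtv_le_integral_abs: "dtv X p q \<le> (LINT x:X|lborel. \<bar>p x\<bar>) + (LINT x:X|lborel. \<bar>q x\<bar>)"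
proof -
  have le: "\<bar>(LINT x:E|lborel. p x) - (LINT x:E|lborel. q x)\<bar>
      \<le> (LINT x:X|lborel. \<bar>p x\<bar>) + (LINT x:X|lborel. \<bar>q x\<bar>)"
    if "E \<in> sets lborel" "E \<subseteq> X" for E
    using abs_set_integral_le_subset[OF p that] abs_set_integral_le_subset[OF q that] by linarith
  then have bdd: "bdd_above ((\<lambda>E. \<bar>(LINT x:E|lborel. p x) - (LINT x:E|lborel. q x)\<bar>)
      ` {E. E \<in> sets lborel \<and> E \<subseteq> X})"
    unfolding bdd_above_def by blast
  then show "\<And>E. E \<in> sets lborel \<Longrightarrow> E \<subseteq> X \<Longrightarrow>
      \<bar>(LINT x:E|lborel. p x) - (LINT x:E|lborel. q x)\<bar> \<le> dtv X p q"
    unfolding dtv_def by (auto intro: cSUP_upper2)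
  show "dtv X p q \<le> (LINT x:X|lborel. \<bar>p x\<bar>) + (LINT x:X|lborel. \<bar>q x\<bar>)"
    unfolding dtv_def by (rule cSUP_least) (auto intro: le)
qed

lemma abs_set_integral_mult_diff_le_dtv:
  fixes p q f :: "'x::euclidean_space \<Rightarrow> real"
  assumes X: "X \<in> sets lborel"
    and p: "p \<in> borel_measurable lborel" "set_integrable lborel X p"
    and q: "q \<in> borel_measurable lborel" "set_integrable lborel X q"
    and f: "set_borel_measurable lborel X f" "\<And>x. x \<in> X \<Longrightarrow> \<bar>f x\<bar> \<le> K" and K: "0 \<le> K"
  shows "\<bar>LINT x:X|lborel. (p x - q x) * f x\<bar> \<le> 2 * K * dtv X p q"
proof -
  txt \<open>On a set where the sign \<open>c = \<plusminus>1\<close> makes \<open>c (p - q)\<close> nonnegative, use it as a weight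
    against \<open>c f\<close>.\<close>
  have part: "set_integrable lborel E (\<lambda>x. (p x - q x) * f x) \<and>
      \<bar>LINT x:E|lborel. (p x - q x) * f x\<bar> \<le> K * dtv X p q"
    if E: "E \<in> sets lborel" "E \<subseteq> X"
      and c: "\<bar>c\<bar> = 1" "\<And>x. x \<in> E \<Longrightarrow> 0 \<le> c * (p x - q x)"
    for E and c :: real
  proof -
    have cc: "c * c = 1"
      using c(1) by (metis abs_mult_self_eq mult_1)
    have eq: "(\<lambda>x. c * (p x - q x) * (c * f x)) = (\<lambda>x. (p x - q x) * f x)"
    proof
      fix x
      have "c * (p x - q x) * (c * f x) = (c * c) * ((p x - q x) * f x)"
        by (simp only: mult_ac)
      then show "c * (p x - q x) * (c * f x) = (p x - q x) * f x"
        by (simp only: cc mult_1)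
    qed
    have w: "(\<lambda>x. c * (p x - q x)) \<in> borel_measurable lborel"
      using p(1) q(1) by simp
    have w_int: "set_integrable lborel E (\<lambda>x. c * (p x - q x))"
      using set_integrable_subset[OF set_integral_diff(1)[OF p(2) q(2)] E] by simp
    have cf: "set_borel_measurable lborel E (\<lambda>x. c * f x)"
      using borel_measurable_times[OF borel_measurable_const
          set_borel_measurable_subset[OF f(1) E, unfolded set_borel_measurable_def], of c]
      unfolding set_borel_measurable_def by (simp add: mult.left_commute)
    have cf_le: "\<And>x. x \<in> E \<Longrightarrow> \<bar>c * f x\<bar> \<le> K"
      using c(1) f(2) E(2) by (auto simp: abs_mult)
    have "(LINT x:E|lborel. c * (p x - q x)) = c * ((LINT x:E|lborel. p x) - (LINT x:E|lborel. q x))"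
      using set_integrable_subset[OF p(2) E] set_integrable_subset[OF q(2) E] by simp
    also have "\<dots> \<le> dtv X p q"
      by (rule order_trans[OF abs_ge_self])
        (simp add: abs_mult c(1) abs_set_integral_diff_le_dtv[OF p(2) q(2) E])
    finally have "K * (LINT x:E|lborel. c * (p x - q x)) \<le> K * dtv X p q"
      using K by (rule mult_left_mono)
    then show ?thesis
      using set_integrable_mult_bounded[OF w c(2) w_int cf cf_le]
        abs_set_integral_mult_bounded_le[OF w c(2) w_int cf cf_le]
      unfolding eq by linarith
  qed
  define E where "E = X \<inter> {x \<in> space lborel. q x \<le> p x}"
  have E_sets: "E \<in> sets lborel" and F_sets: "X - E \<in> sets lborel"
    unfolding E_def using X p(1) q(1) by measurable
  have X_split: "X = E \<union> (X - E)" "E \<inter> (X - E) = {}" "E \<subseteq> X" "X - E \<subseteq> X"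
    unfolding E_def by auto
  have E_pos: "\<And>x. x \<in> E \<Longrightarrow> 0 \<le> 1 * (p x - q x)"
    and F_pos: "\<And>x. x \<in> X - E \<Longrightarrow> 0 \<le> -1 * (p x - q x)"
    unfolding E_def by auto
  note E_part = part[OF E_sets X_split(3) _ E_pos] and F_part = part[OF F_sets X_split(4) _ F_pos]
  have "(LINT x:X|lborel. (p x - q x) * f x)
      = (LINT x:E|lborel. (p x - q x) * f x) + (LINT x:X - E|lborel. (p x - q x) * f x)"
    by (subst X_split(1), rule set_integral_Un[OF X_split(2)]) (use E_part F_part in simp_all)
  then have "\<bar>LINT x:X|lborel. (p x - q x) * f x\<bar>
      \<le> \<bar>LINT x:E|lborel. (p x - q x) * f x\<bar> + \<bar>LINT x:X - E|lborel. (p x - q x) * f x\<bar>"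
    by (simp only: abs_triangle_ineq)
  then show ?thesis
    using conjunct2[OF E_part] conjunct2[OF F_part] by linarith
qed

lemma density_on_dtv_le_2:
  assumes "density_on X p" "density_on X q"
  shows "dtv X p q \<le> 2"
proof -
  have "set_integrable lborel X p" "(LINT x:X|lborel. \<bar>p x\<bar>) = 1"
    and "set_integrable lborel X q" "(LINT x:X|lborel. \<bar>q x\<bar>) = 1"
    using assms unfolding density_on_def by auto
  then show ?thesis
    using dtv_le_integral_abs[of X p q] by linarith
qed

lemma dtv_le_SUP_dtv:
  fixes p q :: "'i \<Rightarrow> 'x::euclidean_space \<Rightarrow> real"
  assumes "\<And>j. j \<in> I \<Longrightarrow> density_on X (p j)" "\<And>j. j \<in> I \<Longrightarrow> density_on X (q j)" "i \<in> I"
  shows "dtv X (p i) (q i) \<le> (SUP j\<in>I. dtv X (p j) (q j))"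
  using assms by (intro cSUP_upper bdd_aboveI2[where M = 2]) (auto intro: density_on_dtv_le_2)

lemma density_on_set_integral_diff_le_dtv:
  assumes X: "X \<in> sets lborel" and p: "density_on X p" and q: "density_on X q"
    and f: "set_borel_measurable lborel X f" "\<And>x. x \<in> X \<Longrightarrow> \<bar>f x\<bar> \<le> K" and K: "0 \<le> K"
  shows "\<bar>(LINT x:X|lborel. p x * f x) - (LINT x:X|lborel. q x * f x)\<bar> \<le> 2 * K * dtv X p q"
proof -
  have "(LINT x:X|lborel. p x * f x) - (LINT x:X|lborel. q x * f x)
      = (LINT x:X|lborel. (p x - q x) * f x)"
    using set_integral_diff(2)[OF density_on_set_integrable_mult[OF p f]
        density_on_set_integrable_mult[OF q f]]
    by (simp add: left_diff_distrib)
  moreover have "p \<in> borel_measurable lborel" "set_integrable lborel X p"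
    and "q \<in> borel_measurable lborel" "set_integrable lborel X q"
    using p q unfolding density_on_def by auto
  ultimately show ?thesis
    using abs_set_integral_mult_diff_le_dtv[OF X _ _ _ _ f K] by metis
qed

lemma cSUP_le_divide_of_contraction:
  fixes f :: "'i \<Rightarrow> real"
  assumes "I \<noteq> {}" "bdd_above (f ` I)" "\<gamma> < 1"
    and "\<And>i. i \<in> I \<Longrightarrow> f i \<le> c + \<gamma> * (SUP j\<in>I. f j)"
  shows "(SUP i\<in>I. f i) \<le> c / (1 - \<gamma>)"
proof -
  have "(SUP i\<in>I. f i) \<le> c + \<gamma> * (SUP j\<in>I. f j)"
    using assms(1,4) by (rule cSUP_least)
  then have "(SUP i\<in>I. f i) * (1 - \<gamma>) \<le> c"
    by (simp add: algebra_simps)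
  then show ?thesis
    using assms(3) by (simp add: pos_le_divide_eq)
qed

lemma abs_le_Rmax:
  assumes "bounded ((\<lambda>p. R (fst p) (snd p)) ` (S \<times> A))" "s \<in> S" "a \<in> A"
  shows "\<bar>R s a\<bar> \<le> Rmax S A R"
proof -
  let ?I = "(\<lambda>p. R (fst p) (snd p)) ` (S \<times> A)"
  have above: "bdd_above ?I" and below: "bdd_below ?I"
    using assms(1) by (auto intro: bounded_imp_bdd_above bounded_imp_bdd_below)
  have sa: "(s, a) \<in> S \<times> A"
    using assms(2,3) by simp
  have "R s a \<le> (SUP p\<in>S \<times> A. R (fst p) (snd p))"
    using cSUP_upper[OF sa above] by simp
  moreover have "(INF p\<in>S \<times> A. R (fst p) (snd p)) \<le> R s a"
    using cINF_lower[OF below sa] by simp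
  ultimately show ?thesis
    unfolding Rmax_def by linarith
qed

lemma set_borel_measurable_section:
  fixes \<phi> :: "'s::euclidean_space \<Rightarrow> 'o::euclidean_space \<Rightarrow> real"
  assumes "(\<lambda>(s', y). indicator (S \<times> Ob) (s', y) * \<phi> s' y) \<in> borel_measurable (lborel \<Otimes>\<^sub>M lborel)"
    and "s' \<in> S"
  shows "set_borel_measurable lborel Ob (\<phi> s')"
proof -
  have "(\<lambda>y. (\<lambda>(s', y). indicator (S \<times> Ob) (s', y) * \<phi> s' y) (s', y)) \<in> borel_measurable lborel"
    by (rule measurable_Pair2[OF assms(1)]) simp
  moreover have "(\<lambda>y. (\<lambda>(s', y). indicator (S \<times> Ob) (s', y) * \<phi> s' y) (s', y))
      = (\<lambda>y. indicator Ob y *\<^sub>R \<phi> s' y)"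
    using assms(2) by (auto simp: indicator_def)
  ultimately show ?thesis
    unfolding set_borel_measurable_def by simp
qed

lemma set_borel_measurable_integral_section:
  fixes \<phi> W :: "'s::euclidean_space \<Rightarrow> 'o::euclidean_space \<Rightarrow> real"
  assumes \<phi>: "(\<lambda>(s', y). indicator (S \<times> Ob) (s', y) * \<phi> s' y)
      \<in> borel_measurable (lborel \<Otimes>\<^sub>M lborel)"
    and W: "(\<lambda>(s', y). W s' y) \<in> borel_measurable (lborel \<Otimes>\<^sub>M lborel)"
  shows "set_borel_measurable lborel S (\<lambda>s'. LINT y:Ob|lborel. W s' y * \<phi> s' y)"
proof -
  have "(\<lambda>(s', y). W s' y * (indicator (S \<times> Ob) (s', y) * \<phi> s' y))
      \<in> borel_measurable (lborel \<Otimes>\<^sub>M lborel)"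
    using borel_measurable_times[OF W \<phi>] by (simp add: split_beta')
  then have "(\<lambda>s'. \<integral>y. W s' y * (indicator (S \<times> Ob) (s', y) * \<phi> s' y) \<partial>lborel)
      \<in> borel_measurable lborel"
    by (rule lborel.borel_measurable_lebesgue_integral)
  moreover have "(\<lambda>s'. \<integral>y. W s' y * (indicator (S \<times> Ob) (s', y) * \<phi> s' y) \<partial>lborel)
      = (\<lambda>s'. indicator S s' *\<^sub>R (LINT y:Ob|lborel. W s' y * \<phi> s' y))"
  proof
    fix s'
    show "(\<integral>y. W s' y * (indicator (S \<times> Ob) (s', y) * \<phi> s' y) \<partial>lborel)
        = indicator S s' *\<^sub>R (LINT y:Ob|lborel. W s' y * \<phi> s' y)"
      unfolding set_lebesgue_integral_def
      by (cases "s' \<in> S")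
        (auto simp: indicator_times intro!: Bochner_Integration.integral_cong split: split_indicator)
  qed
  ultimately show ?thesis
    unfolding set_borel_measurable_def by simp
qed

locale pomdp_alpha =
  fixes S :: "'s::euclidean_space set" and A :: "'a set" and Ob :: "'o::euclidean_space set"
    and T :: "'s \<Rightarrow> 'a \<Rightarrow> 's \<Rightarrow> real" and Z :: "'s \<Rightarrow> 'a \<Rightarrow> 'o \<Rightarrow> real"
    and R :: "'s \<Rightarrow> 'a \<Rightarrow> real" and \<gamma> :: real
    and act :: "'p \<Rightarrow> 'a" and nxt :: "'p \<Rightarrow> 'o \<Rightarrow> 'p" and \<alpha> :: "'p \<Rightarrow> 's \<Rightarrow> real"
  assumes S_sets: "S \<in> sets lborel" and Ob_sets: "Ob \<in> sets lborel"
    and densities: "cond_densities S A Ob T Z"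
    and R_bounded: "bounded ((\<lambda>p. R (fst p) (snd p)) ` (S \<times> A))"
    and discount: "0 \<le> \<gamma>" "\<gamma> < 1"
    and act_in: "\<And>\<sigma>. act \<sigma> \<in> A"
    and alpha: "is_alpha S Ob T Z R \<gamma> act nxt \<alpha>"
begin

lemma transition_density: "s \<in> S \<Longrightarrow> a \<in> A \<Longrightarrow> density_on S (T s a)"
  using densities unfolding cond_densities_def density_on_def by blast

lemma observation_density:
  assumes "s' \<in> S" "a \<in> A"
  shows "density_on Ob (Z s' a)"
proof -
  have "(\<lambda>(s', y). Z s' a y) \<in> borel_measurable (lborel \<Otimes>\<^sub>M lborel)"
    using densities assms(2) unfolding cond_densities_def by blast
  then have "(\<lambda>y. (\<lambda>(s', y). Z s' a y) (s', y)) \<in> borel_measurable lborel"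
    by (rule measurable_Pair2) simp
  then show ?thesis
    using densities assms unfolding cond_densities_def density_on_def by auto
qed

lemma alpha_bounded: "\<exists>B. \<forall>\<sigma>. \<forall>s\<in>S. \<bar>\<alpha> \<sigma> s\<bar> \<le> B"
  using alpha unfolding is_alpha_def by blast

lemma alpha_next_measurable:
  "(\<lambda>(s', y). indicator (S \<times> Ob) (s', y) * \<alpha> (nxt \<sigma> y) s')
    \<in> borel_measurable (lborel \<Otimes>\<^sub>M lborel)"
  using alpha unfolding is_alpha_def by blast

lemma alpha_eq:
  assumes "s \<in> S"
  shows "\<alpha> \<sigma> s = R s (act \<sigma>) + \<gamma> *
    (LINT s':S|lborel. T s (act \<sigma>) s' * (LINT y:Ob|lborel. Z s' (act \<sigma>) y * \<alpha> (nxt \<sigma> y) s'))"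
  using alpha assms unfolding is_alpha_def by (simp add: mult.assoc)

lemma
  fixes \<beta> :: "'o \<Rightarrow> 's \<Rightarrow> real"
  assumes \<beta>: "(\<lambda>(s', y). indicator (S \<times> Ob) (s', y) * \<beta> y s')
      \<in> borel_measurable (lborel \<Otimes>\<^sub>M lborel)"
    and \<beta>_le: "\<And>s' y. s' \<in> S \<Longrightarrow> \<bar>\<beta> y s'\<bar> \<le> K" and a: "a \<in> A"
  shows observation_average_measurable:
      "set_borel_measurable lborel S (\<lambda>s'. LINT y:Ob|lborel. Z s' a y * \<beta> y s')"
    and observation_average_le:
      "s' \<in> S \<Longrightarrow> \<bar>LINT y:Ob|lborel. Z s' a y * \<beta> y s'\<bar> \<le> K"
proof -
  have "(\<lambda>(s', y). Z s' a y) \<in> borel_measurable (lborel \<Otimes>\<^sub>M lborel)"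
    using densities a unfolding cond_densities_def by blast
  then show "set_borel_measurable lborel S (\<lambda>s'. LINT y:Ob|lborel. Z s' a y * \<beta> y s')"
    by (rule set_borel_measurable_integral_section[OF \<beta>])
  show "\<bar>LINT y:Ob|lborel. Z s' a y * \<beta> y s'\<bar> \<le> K" if "s' \<in> S"
    using observation_density[OF that a] set_borel_measurable_section[OF \<beta> that] \<beta>_le[OF that]
    by (rule density_on_abs_set_integral_le)
qed

lemma alpha_bound_nonneg: "0 \<le> Rmax S A R / (1 - \<gamma>)"
  unfolding Rmax_def using discount(2) by simp

lemma alpha_abs_le:
  assumes s: "s \<in> S"
  shows "\<bar>\<alpha> \<sigma> s\<bar> \<le> Rmax S A R / (1 - \<gamma>)"
proof -
  obtain B where B: "\<And>\<sigma> s. s \<in> S \<Longrightarrow> \<bar>\<alpha> \<sigma> s\<bar> \<le> B"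
    using alpha_bounded by blast
  define M where "M = (SUP p\<in>UNIV \<times> S. \<bar>\<alpha> (fst p) (snd p)\<bar>)"
  have bdd: "bdd_above ((\<lambda>p. \<bar>\<alpha> (fst p) (snd p)\<bar>) ` (UNIV \<times> S))"
    using B by (intro bdd_aboveI2[where M = B]) force
  have le_M: "\<bar>\<alpha> \<sigma>' s'\<bar> \<le> M" if "s' \<in> S" for \<sigma>' s'
    unfolding M_def using cSUP_upper[OF _ bdd, of "(\<sigma>', s')"] that by simp
  have step: "\<bar>\<alpha> (fst p) (snd p)\<bar> \<le> Rmax S A R + \<gamma> * M" if p: "p \<in> UNIV \<times> S" for p
  proof -
    obtain \<sigma>' s' where p_eq: "p = (\<sigma>', s')" and s': "s' \<in> S"
      using p by auto
    let ?I = "LINT x:S|lborel. T s' (act \<sigma>') x * (LINT y:Ob|lborel. Z x (act \<sigma>') y * \<alpha> (nxt \<sigma>' y) x)"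
    have "\<bar>?I\<bar> \<le> M"
      using transition_density[OF s' act_in]
        observation_average_measurable[OF alpha_next_measurable le_M act_in]
        observation_average_le[OF alpha_next_measurable le_M act_in]
      by (rule density_on_abs_set_integral_le)
    then have "\<bar>\<gamma> * ?I\<bar> \<le> \<gamma> * M"
      using discount(1) by (simp add: abs_mult mult_left_mono)
    moreover have "\<bar>\<alpha> \<sigma>' s'\<bar> \<le> \<bar>R s' (act \<sigma>')\<bar> + \<bar>\<gamma> * ?I\<bar>"
      unfolding alpha_eq[OF s'] by (rule abs_triangle_ineq)
    ultimately show ?thesis
      using abs_le_Rmax[OF R_bounded s' act_in[of \<sigma>']] unfolding p_eq fst_conv snd_conv by linarith
  qed
  have "M \<le> Rmax S A R / (1 - \<gamma>)"
    unfolding M_def using s by (intro cSUP_le_divide_of_contraction[OF _ bdd discount(2) step[unfolded M_def]]) auto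
  then show ?thesis
    using le_M[OF s, of \<sigma>] by linarith
qed

end

locale pomdp_alpha_pair =
  P: pomdp_alpha S A Ob T Z R \<gamma> act nxt \<alpha> + P': pomdp_alpha S A Ob T' Z' R \<gamma> act nxt \<alpha>'
  for S A Ob T Z T' Z' R \<gamma> act nxt \<alpha> \<alpha>'
begin

lemma dtv_transition_le_SUP:
  assumes "s \<in> S" "a \<in> A"
  shows "dtv S (T s a) (T' s a) \<le> (SUP p\<in>S \<times> A. dtv S (T (fst p) (snd p)) (T' (fst p) (snd p)))"
  using dtv_le_SUP_dtv[of "S \<times> A" S "\<lambda>p. T (fst p) (snd p)" "\<lambda>p. T' (fst p) (snd p)" "(s, a)"]
    P.transition_density P'.transition_density assms by force

lemma dtv_observation_le_SUP:
  assumes "s' \<in> S" "a \<in> A"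
  shows "dtv Ob (Z s' a) (Z' s' a) \<le> (SUP p\<in>S \<times> A. dtv Ob (Z (fst p) (snd p)) (Z' (fst p) (snd p)))"
  using dtv_le_SUP_dtv[of "S \<times> A" Ob "\<lambda>p. Z (fst p) (snd p)" "\<lambda>p. Z' (fst p) (snd p)" "(s', a)"]
    P.observation_density P'.observation_density assms by force

lemma transition_error_le:
  assumes s: "s \<in> S" and a: "a \<in> A"
    and f: "set_borel_measurable lborel S f" "\<And>x. x \<in> S \<Longrightarrow> \<bar>f x\<bar> \<le> Rmax S A R / (1 - \<gamma>)"
  shows "\<bar>(LINT x:S|lborel. T s a x * f x) - (LINT x:S|lborel. T' s a x * f x)\<bar>
    \<le> 2 * (Rmax S A R / (1 - \<gamma>)) * (SUP p\<in>S \<times> A. dtv S (T (fst p) (snd p)) (T' (fst p) (snd p)))"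
proof -
  have "\<bar>(LINT x:S|lborel. T s a x * f x) - (LINT x:S|lborel. T' s a x * f x)\<bar>
      \<le> 2 * (Rmax S A R / (1 - \<gamma>)) * dtv S (T s a) (T' s a)"
    using P.S_sets P.transition_density[OF s a] P'.transition_density[OF s a] f P.alpha_bound_nonneg
    by (rule density_on_set_integral_diff_le_dtv)
  also have "\<dots> \<le> 2 * (Rmax S A R / (1 - \<gamma>))
      * (SUP p\<in>S \<times> A. dtv S (T (fst p) (snd p)) (T' (fst p) (snd p)))"
    using dtv_transition_le_SUP[OF s a] P.alpha_bound_nonneg by (intro mult_left_mono) simp_all
  finally show ?thesis .
qed

lemma observation_error_le:
  assumes x: "x \<in> S" and a: "a \<in> A"
  shows "\<bar>(LINT y:Ob|lborel. Z x a y * \<alpha> (nxt \<sigma> y) x)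
      - (LINT y:Ob|lborel. Z' x a y * \<alpha> (nxt \<sigma> y) x)\<bar>
    \<le> 2 * (Rmax S A R / (1 - \<gamma>)) * (SUP p\<in>S \<times> A. dtv Ob (Z (fst p) (snd p)) (Z' (fst p) (snd p)))"
proof -
  have "\<bar>(LINT y:Ob|lborel. Z x a y * \<alpha> (nxt \<sigma> y) x) - (LINT y:Ob|lborel. Z' x a y * \<alpha> (nxt \<sigma> y) x)\<bar>
      \<le> 2 * (Rmax S A R / (1 - \<gamma>)) * dtv Ob (Z x a) (Z' x a)"
    using P.Ob_sets P.observation_density[OF x a] P'.observation_density[OF x a]
      set_borel_measurable_section[OF P.alpha_next_measurable x] P.alpha_abs_le[OF x]
      P.alpha_bound_nonneg
    by (rule density_on_set_integral_diff_le_dtv)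
  also have "\<dots> \<le> 2 * (Rmax S A R / (1 - \<gamma>))
      * (SUP p\<in>S \<times> A. dtv Ob (Z (fst p) (snd p)) (Z' (fst p) (snd p)))"
    using dtv_observation_le_SUP[OF x a] P.alpha_bound_nonneg by (intro mult_left_mono) simp_all
  finally show ?thesis .
qed

lemma successor_error_le:
  assumes D: "\<And>\<sigma> s. s \<in> S \<Longrightarrow> \<bar>\<alpha> \<sigma> s - \<alpha>' \<sigma> s\<bar> \<le> D"
    and x: "x \<in> S" and a: "a \<in> A"
  shows "\<bar>(LINT y:Ob|lborel. Z' x a y * \<alpha> (nxt \<sigma> y) x)
    - (LINT y:Ob|lborel. Z' x a y * \<alpha>' (nxt \<sigma> y) x)\<bar> \<le> D"
  using P'.observation_density[OF x a]
    set_borel_measurable_section[OF P.alpha_next_measurable x] P.alpha_abs_le[OF x]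
    set_borel_measurable_section[OF P'.alpha_next_measurable x] P'.alpha_abs_le[OF x] D[OF x]
  by (rule density_on_set_integral_diff_le)

lemma alpha_diff_le_step:
  assumes D: "\<And>\<sigma> s. s \<in> S \<Longrightarrow> \<bar>\<alpha> \<sigma> s - \<alpha>' \<sigma> s\<bar> \<le> D" and s: "s \<in> S"
  shows "\<bar>\<alpha> \<sigma> s - \<alpha>' \<sigma> s\<bar>
    \<le> \<gamma> * (2 * (Rmax S A R / (1 - \<gamma>)) * SNM S A Ob T Z T' Z' + D)"
proof -
  define K where "K = Rmax S A R / (1 - \<gamma>)"
  define PT where "PT = (SUP p\<in>S \<times> A. dtv S (T (fst p) (snd p)) (T' (fst p) (snd p)))"
  define PZ where "PZ = (SUP p\<in>S \<times> A. dtv Ob (Z (fst p) (snd p)) (Z' (fst p) (snd p)))"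
  define a where "a = act \<sigma>"
  define g where "g x = (LINT y:Ob|lborel. Z x a y * \<alpha> (nxt \<sigma> y) x)" for x
  define h where "h x = (LINT y:Ob|lborel. Z' x a y * \<alpha> (nxt \<sigma> y) x)" for x
  define g' where "g' x = (LINT y:Ob|lborel. Z' x a y * \<alpha>' (nxt \<sigma> y) x)" for x
  have a: "a \<in> A"
    unfolding a_def by (rule P.act_in)
  note \<alpha> = P.alpha_next_measurable[of \<sigma>] P.alpha_abs_le[folded K_def]
  note \<alpha>' = P'.alpha_next_measurable[of \<sigma>] P'.alpha_abs_le[folded K_def]
  have g: "set_borel_measurable lborel S g" "\<And>x. x \<in> S \<Longrightarrow> \<bar>g x\<bar> \<le> K"
    unfolding g_def using P.observation_average_measurable[OF \<alpha> a] P.observation_average_le[OF \<alpha> a]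
    by auto
  have h: "set_borel_measurable lborel S h" "\<And>x. x \<in> S \<Longrightarrow> \<bar>h x\<bar> \<le> K"
    unfolding h_def using P'.observation_average_measurable[OF \<alpha> a] P'.observation_average_le[OF \<alpha> a]
    by auto
  have g': "set_borel_measurable lborel S g'" "\<And>x. x \<in> S \<Longrightarrow> \<bar>g' x\<bar> \<le> K"
    unfolding g'_def using P'.observation_average_measurable[OF \<alpha>' a] P'.observation_average_le[OF \<alpha>' a]
    by auto
  have transition_part:
    "\<bar>(LINT x:S|lborel. T s a x * g x) - (LINT x:S|lborel. T' s a x * g x)\<bar> \<le> 2 * K * PT"
    using transition_error_le[OF s a g[unfolded K_def]] unfolding K_def PT_def .
  have "\<bar>g x - h x\<bar> \<le> 2 * K * PZ" if "x \<in> S" for x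
    unfolding g_def h_def K_def PZ_def using observation_error_le[OF that a] .
  with P'.transition_density[OF s a] g h
  have observation_part:
    "\<bar>(LINT x:S|lborel. T' s a x * g x) - (LINT x:S|lborel. T' s a x * h x)\<bar> \<le> 2 * K * PZ"
    by (rule density_on_set_integral_diff_le)
  have "\<bar>h x - g' x\<bar> \<le> D" if "x \<in> S" for x
    unfolding h_def g'_def using successor_error_le[OF D that a] .
  with P'.transition_density[OF s a] h g'
  have successor_part:
    "\<bar>(LINT x:S|lborel. T' s a x * h x) - (LINT x:S|lborel. T' s a x * g' x)\<bar> \<le> D"
    by (rule density_on_set_integral_diff_le)
  have "\<alpha> \<sigma> s - \<alpha>' \<sigma> s
      = \<gamma> * ((LINT x:S|lborel. T s a x * g x) - (LINT x:S|lborel. T' s a x * g' x))"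
    using P.alpha_eq[OF s, of \<sigma>] P'.alpha_eq[OF s, of \<sigma>]
    by (simp add: g_def g'_def a_def right_diff_distrib)
  moreover have "\<bar>(LINT x:S|lborel. T s a x * g x) - (LINT x:S|lborel. T' s a x * g' x)\<bar>
      \<le> 2 * K * PT + 2 * K * PZ + D"
    using transition_part observation_part successor_part by linarith
  ultimately have "\<bar>\<alpha> \<sigma> s - \<alpha>' \<sigma> s\<bar> \<le> \<gamma> * (2 * K * PT + 2 * K * PZ + D)"
    using P.discount(1) by (simp add: abs_mult mult_left_mono)
  then show ?thesis
    unfolding SNM_def K_def PT_def PZ_def by (simp add: algebra_simps)
qed

lemma alpha_diff_le:
  assumes s: "s \<in> S"
  shows "\<bar>\<alpha> \<sigma> s - \<alpha>' \<sigma> s\<bar> \<le> 2 * \<gamma> * Rmax S A R / (1 - \<gamma>)^2 * SNM S A Ob T Z T' Z'"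
proof -
  define K where "K = Rmax S A R / (1 - \<gamma>)"
  define D where "D = (SUP p\<in>UNIV \<times> S. \<bar>\<alpha> (fst p) (snd p) - \<alpha>' (fst p) (snd p)\<bar>)"
  have "\<bar>\<alpha> \<sigma>' s' - \<alpha>' \<sigma>' s'\<bar> \<le> 2 * K" if "s' \<in> S" for \<sigma>' s'
    using abs_triangle_ineq4[of "\<alpha> \<sigma>' s'" "\<alpha>' \<sigma>' s'"] P.alpha_abs_le[OF that, of \<sigma>']
      P'.alpha_abs_le[OF that, of \<sigma>'] unfolding K_def by linarith
  then have bdd: "bdd_above ((\<lambda>p. \<bar>\<alpha> (fst p) (snd p) - \<alpha>' (fst p) (snd p)\<bar>) ` (UNIV \<times> S))"
    by (intro bdd_aboveI2[where M = "2 * K"]) force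
  have le_D: "\<bar>\<alpha> \<sigma>' s' - \<alpha>' \<sigma>' s'\<bar> \<le> D" if "s' \<in> S" for \<sigma>' s'
    unfolding D_def using cSUP_upper[OF _ bdd, of "(\<sigma>', s')"] that by simp
  have step: "\<bar>\<alpha> (fst p) (snd p) - \<alpha>' (fst p) (snd p)\<bar>
      \<le> \<gamma> * (2 * K * SNM S A Ob T Z T' Z') + \<gamma> * D" if "p \<in> UNIV \<times> S" for p
    using alpha_diff_le_step[OF le_D, of "snd p" "fst p"] that unfolding K_def by (auto simp: distrib_left)
  have "D \<le> \<gamma> * (2 * K * SNM S A Ob T Z T' Z') / (1 - \<gamma>)"
    unfolding D_def using s
    by (intro cSUP_le_divide_of_contraction[OF _ bdd P.discount(2) step[unfolded D_def]]) auto
  also have "\<dots> = 2 * \<gamma> * Rmax S A R / (1 - \<gamma>)^2 * SNM S A Ob T Z T' Z'"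
    unfolding K_def using P.discount(2) by (simp add: power2_eq_square field_simps)
  finally show ?thesis
    using le_D[OF s, of \<sigma>] by linarith
qed

end

theorem lemma1:
  fixes S :: "'s::euclidean_space set" and A :: "'a::euclidean_space set"
    and Ob :: "'o::euclidean_space set"
    and T T' :: "'s \<Rightarrow> 'a \<Rightarrow> 's \<Rightarrow> real" and Z Z' :: "'s \<Rightarrow> 'a \<Rightarrow> 'o \<Rightarrow> real"
    and R :: "'s \<Rightarrow> 'a \<Rightarrow> real" and \<gamma> :: real
    and act :: "'p \<Rightarrow> 'a" and nxt :: "'p \<Rightarrow> 'o \<Rightarrow> 'p"
    and \<alpha> \<alpha>' :: "'p \<Rightarrow> 's \<Rightarrow> real"
  assumes "bounded S" "S \<in> sets lborel" "bounded A" "bounded Ob" "Ob \<in> sets lborel"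
    and "cond_densities S A Ob T Z" and "cond_densities S A Ob T' Z'"
    and "bounded ((\<lambda>p. R (fst p) (snd p)) ` (S \<times> A))"
    and "0 < \<gamma>" "\<gamma> < 1"
    and "\<And>\<sigma>. act \<sigma> \<in> A"
    and "is_alpha S Ob T Z R \<gamma> act nxt \<alpha>"
    and "is_alpha S Ob T' Z' R \<gamma> act nxt \<alpha>'"
    and "s \<in> S"
  shows "\<bar>\<alpha> \<sigma> s - \<alpha>' \<sigma> s\<bar> \<le> 2 * \<gamma> * Rmax S A R / (1 - \<gamma>)^2 * SNM S A Ob T Z T' Z'"
proof -
  interpret pomdp_alpha_pair S A Ob T Z T' Z' R \<gamma> act nxt \<alpha> \<alpha>'
    by unfold_locales (use assms in auto)
  show ?thesis
    using alpha_diff_le[OF \<open>s \<in> S\<close>] .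
qed

end
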